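(* Let $G=(\mathcal{V},\mathcal{E})$ be a connected undirected graph on $\mathcal{V}=\{1,\dots,n\}$, let $\mathcal{V}_c\subseteq\mathcal{V}$ be a set of corrupt nodes, $\mathcal{V}_h=\mathcal{V}\setminus\mathcal{V}_c$, and let $G_h=(\mathcal{V}_h,\mathcal{E}_h)$ be the subgraph induced on the honest nodes, with connected components having vertex sets $\mathcal{V}_{h,1},\dots,\mathcal{V}_{h,k_h}$. Consider any (message-passing) protocol on $G$ in which each node $j$ has a real input $s_j$ and private randomness $r_j$; in each round, every node sends to each of its neighbours a message that is a function of its input, its randomness and all messages it has received so far; at the end every node outputs a function of its input, randomness and received messages. Suppose the protocol is correct: for every choice of inputs and randomness, every node outputs $\sum_{j=1}^n s_j$. Define the view of the adversary in an execution as the inputs and randomness of the nodes in $\mathcal{V}_c$, all messages received by nodes in $\mathcal{V}_c$, and the output. Then for each $k=1,\dots,k_h$ the partial sum $\sum_{j\in\mathcal{V}_{h,k}}s_j$ is determined by the adversary's view: any two executions producing the same adversary view have the same value of $\sum_{j\in\mathcal{V}_{h,k}}s_j$ for every $k$.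
   Context: $\mathcal{E}_h=\{\{i,j\}\in\mathcal{E}: i,j\in\mathcal{V}_h\}$. Messages travel only along edges of $G$. *)

theory Defs
  imports Complex_Main
begin

text \<open>
A message-passing protocol with T rounds, message type 'm
and randomness type 'r is given by
  send t i j x \<rho> h : message sent in round t by node i to neighbour j, as a function of
                     i's input x, randomness \<rho> and history h of messages received so far;
  out j x \<rho> h     : output of node j from its input, randomness and received messages.
A history h :: nat \<Rightarrow> nat \<Rightarrow> 'm option maps (round t', sender l) to the message received
in round t' from l (None if nothing was received).
\<close>

definition simple_graph :: "nat \<Rightarrow> (nat \<Rightarrow> nat \<Rightarrow> bool) \<Rightarrow> bool" where
  "simple_graph n E \<longleftrightarrow>
     (\<forall>i j. E i j \<longrightarrow> i \<in> {1..n} \<and> j \<in> {1..n}) \<and>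
     (\<forall>i j. E i j \<longrightarrow> E j i) \<and> (\<forall>i. \<not> E i i)"

definition connected_graph :: "nat \<Rightarrow> (nat \<Rightarrow> nat \<Rightarrow> bool) \<Rightarrow> bool" where
  "connected_graph n E \<longleftrightarrow> (\<forall>u\<in>{1..n}. \<forall>v\<in>{1..n}. E\<^sup>*\<^sup>* u v)"

definition induced_component ::
  "(nat \<Rightarrow> nat \<Rightarrow> bool) \<Rightarrow> nat set \<Rightarrow> nat \<Rightarrow> nat set" where
  "induced_component E H v = {u \<in> H. (\<lambda>a b. E a b \<and> a \<in> H \<and> b \<in> H)\<^sup>*\<^sup>* v u}"

text \<open>hist E send s r t j = messages received by node j in rounds 0..t-1\<close>
primrec hist ::
  "(nat \<Rightarrow> nat \<Rightarrow> bool) \<Rightarrow>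
   (nat \<Rightarrow> nat \<Rightarrow> nat \<Rightarrow> real \<Rightarrow> 'r \<Rightarrow> (nat \<Rightarrow> nat \<Rightarrow> 'm option) \<Rightarrow> 'm) \<Rightarrow>
   (nat \<Rightarrow> real) \<Rightarrow> (nat \<Rightarrow> 'r) \<Rightarrow> nat \<Rightarrow> nat \<Rightarrow> (nat \<Rightarrow> nat \<Rightarrow> 'm option)" where
  "hist E send s r 0 = (\<lambda>j t' l. None)"
| "hist E send s r (Suc t) =
     (\<lambda>j t' l. if t' < t then hist E send s r t j t' l
               else if t' = t \<and> E l j then Some (send t l j (s l) (r l) (hist E send s r t l))
               else None)"

definition node_output ::
  "(nat \<Rightarrow> nat \<Rightarrow> bool) \<Rightarrow>
   (nat \<Rightarrow> nat \<Rightarrow> nat \<Rightarrow> real \<Rightarrow> 'r \<Rightarrow> (nat \<Rightarrow> nat \<Rightarrow> 'm option) \<Rightarrow> 'm) \<Rightarrow>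
   (nat \<Rightarrow> real \<Rightarrow> 'r \<Rightarrow> (nat \<Rightarrow> nat \<Rightarrow> 'm option) \<Rightarrow> real) \<Rightarrow> nat \<Rightarrow>
   (nat \<Rightarrow> real) \<Rightarrow> (nat \<Rightarrow> 'r) \<Rightarrow> nat \<Rightarrow> real" where
  "node_output E send out T s r j = out j (s j) (r j) (hist E send s r T j)"

definition correct_protocol where
  "correct_protocol n E send out T \<longleftrightarrow>
     (\<forall>s r. \<forall>j\<in>{1..n}. node_output E send out T s r j = (\<Sum>i\<in>{1..n}. s i))"

definition same_view where
  "same_view n E send out T Vc s r s' r' \<longleftrightarrow>
     (\<forall>j\<in>Vc. s j = s' j \<and> r j = r' j \<and> hist E send s r T j = hist E send s' r' T j) \<and>
     (\<forall>j\<in>{1..n}. node_output E send out T s r j = node_output E send out T s' r' j)"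

end

theory Submission
  imports Defs
begin

text \<open>
  Let \<open>C\<close> be the honest component of \<open>v\<close>. Every edge leaving \<open>C\<close> ends in a corrupt node, so the
  hybrid execution that runs the first execution on \<open>C\<close> and the second one elsewhere is
  consistent: nodes of \<open>C\<close> receive exactly what they received in the first execution, all other
  nodes exactly what they received in the second one, because the only messages crossing the
  cut are received by, or sent by, corrupt nodes, whose view is the same in both executions.
  Hence \<open>v\<close> outputs the same value in the hybrid as in the first execution, which by the equal
  views is the output of the second one. By correctness the total input of the hybrid equals
  that of the second execution; they differ only on \<open>C\<close>, so the sums over \<open>C\<close> agree.
\<close>

lemma hist_beyond_round: "t \<le> t' \<Longrightarrow> hist E send s r t j t' l = None"
  by (induction t arbitrary: j) auto

lemma hist_prefix:
  "t \<le> u \<Longrightarrow> t' < t \<Longrightarrow> hist E send s r u j t' l = hist E send s r t j t' l"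
proof (induction u)
  case (Suc u)
  then show ?case
    by (cases "t = Suc u") auto
qed simp

lemma hist_eq_prefix:
  assumes "hist E send s r T j = hist E send s' r' T j" and "t \<le> T"
  shows "hist E send s r t j = hist E send s' r' t j"
proof (intro ext)
  fix t' l
  show "hist E send s r t j t' l = hist E send s' r' t j t' l"
  proof (cases "t' < t")
    case True
    then show ?thesis
      using assms(1) hist_prefix[OF \<open>t \<le> T\<close> True] by metis
  qed (simp add: hist_beyond_round)
qed

lemma hist_override_on:
  assumes cut: "\<And>i j. E i j \<or> E j i \<Longrightarrow> i \<in> C \<Longrightarrow> j \<notin> C \<Longrightarrow> j \<in> Vc"
    and view: "\<And>j. j \<in> Vc \<Longrightarrow>
      s j = s' j \<and> r j = r' j \<and> hist E send s r T j = hist E send s' r' T j"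
    and "t \<le> T"
  shows "hist E send (override_on s' s C) (override_on r' r C) t j =
    (if j \<in> C then hist E send s r t j else hist E send s' r' t j)"
  using \<open>t \<le> T\<close>
proof (induction t arbitrary: j)
  case (Suc t)
  let ?h = "hist E send (override_on s' s C) (override_on r' r C)"
  have IH: "?h t l = (if l \<in> C then hist E send s r t l else hist E send s' r' t l)" for l
    using Suc by simp
  have view_t: "hist E send s r u l = hist E send s' r' u l" if "l \<in> Vc" "u \<le> T" for l u
    using view[OF \<open>l \<in> Vc\<close>] hist_eq_prefix \<open>u \<le> T\<close> by blast
  have round_t: "send t l j (override_on s' s C l) (override_on r' r C l) (?h t l) =
      (if j \<in> C then send t l j (s l) (r l) (hist E send s r t l)
       else send t l j (s' l) (r' l) (hist E send s' r' t l))" if "E l j" for l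
  proof (cases "l \<in> C"; cases "j \<in> C")
    assume "l \<notin> C" "j \<in> C"
    then have "l \<in> Vc" using cut \<open>E l j\<close> by blast
    then show ?thesis
      using \<open>l \<notin> C\<close> \<open>j \<in> C\<close> IH view view_t[of l t] Suc.prems by simp
  next
    assume "l \<in> C" "j \<notin> C"
    then have "j \<in> Vc" using cut \<open>E l j\<close> by blast
    then have "hist E send s r (Suc t) j t l = hist E send s' r' (Suc t) j t l"
      using view_t Suc.prems by metis
    then have "send t l j (s l) (r l) (hist E send s r t l) =
        send t l j (s' l) (r' l) (hist E send s' r' t l)"
      using \<open>E l j\<close> by simp
    then show ?thesis
      using \<open>l \<in> C\<close> \<open>j \<notin> C\<close> \<open>E l j\<close> IH by simp
  qed (simp_all add: IH)
  show ?case
    by (intro ext) (use round_t in \<open>auto simp: IH\<close>)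
qed simp

lemma induced_component_closed:
  assumes "j \<in> induced_component E H v" and "E j l" and "l \<in> H"
  shows "l \<in> induced_component E H v"
  using assms unfolding induced_component_def
  by (auto intro: rtranclp.rtrancl_into_rtrancl)

lemma sum_override_on:
  fixes f g :: "'a \<Rightarrow> 'b::ab_group_add"
  assumes "finite A" and "C \<subseteq> A"
  shows "sum (override_on g f C) A = sum g A - sum g C + sum f C"
proof -
  have "sum (override_on g f C) A = sum f C + sum g (A - C)"
    using assms by (simp add: sum.subset_diff[of C A] add.commute)
  also have "sum g (A - C) = sum g A - sum g C"
    using assms by (simp add: sum_diff)
  finally show ?thesis by simp
qed

theorem proposition1:
  fixes n :: nat and E :: "nat \<Rightarrow> nat \<Rightarrow> bool" and Vc :: "nat set" and T :: nat
    and send :: "nat \<Rightarrow> nat \<Rightarrow> nat \<Rightarrow> real \<Rightarrow> 'r \<Rightarrow> (nat \<Rightarrow> nat \<Rightarrow> 'm option) \<Rightarrow> 'm"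
    and out :: "nat \<Rightarrow> real \<Rightarrow> 'r \<Rightarrow> (nat \<Rightarrow> nat \<Rightarrow> 'm option) \<Rightarrow> real"
    and s s' :: "nat \<Rightarrow> real" and r r' :: "nat \<Rightarrow> 'r" and v :: nat
  assumes "simple_graph n E"
    and "connected_graph n E"
    and "Vc \<subseteq> {1..n}"
    and "correct_protocol n E send out T"
    and "same_view n E send out T Vc s r s' r'"
    and "v \<in> {1..n} - Vc"
  shows "(\<Sum>j\<in>induced_component E ({1..n} - Vc) v. s j)
       = (\<Sum>j\<in>induced_component E ({1..n} - Vc) v. s' j)"
proof -
  define C where "C = induced_component E ({1..n} - Vc) v"
  have C_sub: "C \<subseteq> {1..n}" and v_C: "v \<in> C"
    using assms(6) unfolding C_def induced_component_def by auto
  have cut: "j \<in> Vc" if "E i j \<or> E j i" "i \<in> C" "j \<notin> C" for i j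
    using that assms(1) induced_component_closed[of i E _ v j]
    unfolding simple_graph_def C_def by blast
  have view: "\<And>j. j \<in> Vc \<Longrightarrow>
      s j = s' j \<and> r j = r' j \<and> hist E send s r T j = hist E send s' r' T j"
    and same_output: "node_output E send out T s r v = node_output E send out T s' r' v"
    using assms(5,6) unfolding same_view_def by auto
  have "node_output E send out T (override_on s' s C) (override_on r' r C) v =
      node_output E send out T s r v"
    using hist_override_on[OF cut view order_refl] v_C
    unfolding node_output_def by simp
  then have "sum (override_on s' s C) {1..n} = sum s' {1..n}"
    using assms(4,6) same_output unfolding correct_protocol_def by (metis DiffD1)
  then have "sum s C = sum s' C"
    using sum_override_on[OF finite_atLeastAtMost C_sub, of s' s] by simp
  then show ?thesis
    unfolding C_def .
qed

end
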